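(* Let $(N_0,c,w,P)$ be an RS-situation and $S\subseteq N$ a nonempty coalition of retailers. Let $P_S=(p_i)_{i\in S}$ be the restriction of $P$ to $S$. Then the RS-game $(S_0,v_{S_0})$ corresponding to the RS-situation $(S_0,c,w,P_S)$ (with retailer set $S$ and supplier $0$) is balanced.
   Context: Let $c\in\mathbb{R}$. An RS-problem is a triple $(c,w,p)$ where $w:\mathbb{R}_+\to(c,+\infty)$ is decreasing (non-increasing) and continuous, and $p:\mathbb{R}_+\to\mathbb{R}$ is decreasing (non-increasing) and continuous, satisfies $p(0)>w(0)$, and there exists $q>0$ with $p(q)=c$. An RS-situation is a tuple $(M_0,c,w,(p_i)_{i\in M})$ where $M$ is a finite nonempty set of retailers, $0$ denotes the supplier, $M_0=M\cup\{0\}$, and $(c,w,p_i)$ is an RS-problem for each $i\in M$; here $N=\{1,\dots,n\}$ and $S_0=S\cup\{0\}$. For $q\ge0$ and $\omega\in\mathbb{R}$, $\Pi_i^{ret}(q;\omega)=(p_i(q)-\omega)q$. For nonempty $T\subseteq M$, $(q_i^T)_{i\in T}$ is a fixed optimal solution of: maximize $\sum_{i\in T}(p_i(q_i)-w(q_T))q_i$ over $q\in\mathbb{R}_+^{T}$ subject to $p_i(q_i)\ge w(q_T)$ for all $i\in T$, where $q_T=\sum_{i\in T}q_i$; $q_T^T=\sum_{i\in T}q_i^T$. For $i\in M$, $q_i^c$ is a fixed optimal solution of: maximize $(p_i(q)-c)q$ over $q\ge0$ subject to $p_i(q)\ge c$. The corresponding RS-game $(M_0,v)$ is the TU game on $M_0$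 with $v(\emptyset)=0$ and, for all $T\subseteq M$, $v(T)=\sum_{i\in T}\Pi_i^{ret}(q_i^T;w(q_T^T))$ and $v(T\cup\{0\})=\sum_{i\in T}\Pi_i^{ret}(q_i^c;c)$. A TU game $(M_0,v)$ is balanced iff its core $\{x\in\mathbb{R}^{M_0}: \sum_{i\in M_0}x_i=v(M_0),\ \sum_{i\in T}x_i\ge v(T)\ \forall T\subset M_0\}$ is nonempty. *)

theory Defs
  imports "HOL-Analysis.Analysis"
begin

definition nonincr_nonneg :: "(real \<Rightarrow> real) \<Rightarrow> bool" where
  "nonincr_nonneg f \<longleftrightarrow> (\<forall>x y. 0 \<le> x \<longrightarrow> x \<le> y \<longrightarrow> f y \<le> f x)"

definition rs_problem :: "real \<Rightarrow> (real \<Rightarrow> real) \<Rightarrow> (real \<Rightarrow> real) \<Rightarrow> bool" where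
  "rs_problem c w p \<longleftrightarrow>
     nonincr_nonneg w \<and> continuous_on {0..} w \<and> (\<forall>x\<ge>0. c < w x) \<and>
     nonincr_nonneg p \<and> continuous_on {0..} p \<and> p 0 > w 0 \<and>
     (\<exists>q>0. p q = c)"

text \<open>RS-situation with supplier 0 and finite nonempty retailer set M (0 not in M).\<close>
definition rs_situation :: "nat set \<Rightarrow> real \<Rightarrow> (real \<Rightarrow> real) \<Rightarrow> (nat \<Rightarrow> real \<Rightarrow> real) \<Rightarrow> bool" where
  "rs_situation M c w p \<longleftrightarrow>
     finite M \<and> M \<noteq> {} \<and> 0 \<notin> M \<and> (\<forall>i\<in>M. rs_problem c w (p i))"

definition Pi_ret :: "(real \<Rightarrow> real) \<Rightarrow> real \<Rightarrow> real \<Rightarrow> real" where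
  "Pi_ret p q \<omega> = (p q - \<omega>) * q"

text \<open>Coalition problem for T: vectors in R_+^T (represented by functions, only values on T matter).\<close>
definition coal_feasible :: "(real \<Rightarrow> real) \<Rightarrow> (nat \<Rightarrow> real \<Rightarrow> real) \<Rightarrow> nat set \<Rightarrow> (nat \<Rightarrow> real) \<Rightarrow> bool" where
  "coal_feasible w p T q \<longleftrightarrow>
     (\<forall>i\<in>T. 0 \<le> q i) \<and> (\<forall>i\<in>T. p i (q i) \<ge> w (\<Sum>j\<in>T. q j))"

definition coal_obj :: "(real \<Rightarrow> real) \<Rightarrow> (nat \<Rightarrow> real \<Rightarrow> real) \<Rightarrow> nat set \<Rightarrow> (nat \<Rightarrow> real) \<Rightarrow> real" where
  "coal_obj w p T q = (\<Sum>i\<in>T. (p i (q i) - w (\<Sum>j\<in>T. q j)) * q i)"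

definition coal_optimal :: "(real \<Rightarrow> real) \<Rightarrow> (nat \<Rightarrow> real \<Rightarrow> real) \<Rightarrow> nat set \<Rightarrow> (nat \<Rightarrow> real) \<Rightarrow> bool" where
  "coal_optimal w p T q \<longleftrightarrow> coal_feasible w p T q \<and>
     (\<forall>q'. coal_feasible w p T q' \<longrightarrow> coal_obj w p T q' \<le> coal_obj w p T q)"

definition single_optimal :: "real \<Rightarrow> (real \<Rightarrow> real) \<Rightarrow> real \<Rightarrow> bool" where
  "single_optimal c p q \<longleftrightarrow> 0 \<le> q \<and> p q \<ge> c \<and>
     (\<forall>q'. 0 \<le> q' \<longrightarrow> p q' \<ge> c \<longrightarrow> (p q' - c) * q' \<le> (p q - c) * q)"

text \<open>RS-game on player set insert 0 M, given fixed optimal solutions qT (per coalition) and qc.\<close>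
definition rs_game :: "real \<Rightarrow> (real \<Rightarrow> real) \<Rightarrow> (nat \<Rightarrow> real \<Rightarrow> real) \<Rightarrow>
    (nat set \<Rightarrow> nat \<Rightarrow> real) \<Rightarrow> (nat \<Rightarrow> real) \<Rightarrow> nat set \<Rightarrow> real" where
  "rs_game c w p qT qc X =
     (if 0 \<in> X then (\<Sum>i\<in>X - {0}. Pi_ret (p i) (qc i) c)
      else (\<Sum>i\<in>X. Pi_ret (p i) (qT X i) (w (\<Sum>j\<in>X. qT X j))))"

definition core :: "'a set \<Rightarrow> ('a set \<Rightarrow> real) \<Rightarrow> ('a \<Rightarrow> real) set" where
  "core P v = {x. (\<Sum>i\<in>P. x i) = v P \<and> (\<forall>T. T \<subset> P \<longrightarrow> (\<Sum>i\<in>T. x i) \<ge> v T)}"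

definition balanced :: "'a set \<Rightarrow> ('a set \<Rightarrow> real) \<Rightarrow> bool" where
  "balanced P v \<longleftrightarrow> core P v \<noteq> {}"

end

theory Submission
  imports Defs
begin

text \<open>Give every retailer its stand-alone profit at the production cost \<open>c\<close> and the supplier
  nothing. A coalition containing the supplier earns exactly these profits. A coalition of retailers
  alone buys at a wholesale price \<open>w(q\<^sub>T) > c\<close>, so each member earns at most what it would earn
  at price \<open>c\<close> with the same quantity, which is at most its stand-alone optimum. Hence this
  allocation lies in the core.\<close>

definition standalone_allocation :: "real \<Rightarrow> (nat \<Rightarrow> real \<Rightarrow> real) \<Rightarrow> (nat \<Rightarrow> real) \<Rightarrow> nat \<Rightarrow> real"
  where "standalone_allocation c p qc i = (if i = 0 then 0 else Pi_ret (p i) (qc i) c)"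

lemma Pi_ret_le_single_optimal:
  assumes "single_optimal c p q\<^sub>c" and "0 \<le> q" and "c < \<omega>" and "\<omega> \<le> p q"
  shows "Pi_ret p q \<omega> \<le> Pi_ret p q\<^sub>c c"
proof -
  have "Pi_ret p q \<omega> \<le> (p q - c) * q"
    unfolding Pi_ret_def using assms(2,3) by (intro mult_right_mono) auto
  also have "\<dots> \<le> Pi_ret p q\<^sub>c c"
    using assms unfolding single_optimal_def Pi_ret_def by auto
  finally show ?thesis .
qed

lemma rs_game_with_supplier:
  assumes "0 \<in> X"
  shows "rs_game c w p qT qc X = sum (standalone_allocation c p qc) X"
proof (cases "finite X")
  case True
  have "sum (standalone_allocation c p qc) X = sum (standalone_allocation c p qc) (X - {0})"
    using True assms by (simp add: sum.remove standalone_allocation_def)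
  also have "\<dots> = (\<Sum>i\<in>X - {0}. Pi_ret (p i) (qc i) c)"
    by (rule sum.cong) (auto simp: standalone_allocation_def)
  finally show ?thesis using assms by (simp add: rs_game_def)
qed (use assms in \<open>simp add: rs_game_def\<close>)

lemma rs_game_without_supplier_le:
  assumes "0 \<notin> T" and "coal_feasible w p T (qT T)"
    and "\<And>x. 0 \<le> x \<Longrightarrow> c < w x"
    and "\<And>i. i \<in> T \<Longrightarrow> single_optimal c (p i) (qc i)"
  shows "rs_game c w p qT qc T \<le> sum (standalone_allocation c p qc) T"
proof -
  let ?\<omega> = "w (\<Sum>j\<in>T. qT T j)"
  have nonneg: "\<And>i. i \<in> T \<Longrightarrow> 0 \<le> qT T i"
    and price: "\<And>i. i \<in> T \<Longrightarrow> ?\<omega> \<le> p i (qT T i)"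
    using assms(2) by (auto simp: coal_feasible_def)
  have "c < ?\<omega>"
    using assms(3) nonneg by (simp add: sum_nonneg)
  then have "rs_game c w p qT qc T \<le> (\<Sum>i\<in>T. Pi_ret (p i) (qc i) c)"
    using assms(1,4) nonneg price
    by (auto simp: rs_game_def intro!: sum_mono Pi_ret_le_single_optimal)
  also have "\<dots> = sum (standalone_allocation c p qc) T"
    using assms(1) by (intro sum.cong) (auto simp: standalone_allocation_def)
  finally show ?thesis .
qed

lemma standalone_allocation_in_core:
  assumes "0 \<notin> M"
    and "\<And>x. 0 \<le> x \<Longrightarrow> c < w x"
    and "\<And>T. T \<subseteq> M \<Longrightarrow> coal_feasible w p T (qT T)"
    and "\<And>i. i \<in> M \<Longrightarrow> single_optimal c (p i) (qc i)"
  shows "standalone_allocation c p qc \<in> core (insert 0 M) (rs_game c w p qT qc)"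
proof -
  have "sum (standalone_allocation c p qc) T \<ge> rs_game c w p qT qc T"
    if "T \<subseteq> insert 0 M" for T
  proof (cases "0 \<in> T")
    case False
    with that have "T \<subseteq> M" by auto
    with False show ?thesis
      using assms(2-4) by (intro rs_game_without_supplier_le) auto
  qed (simp add: rs_game_with_supplier)
  then show ?thesis
    unfolding core_def by (auto simp: rs_game_with_supplier)
qed

theorem corollary5p3:
  fixes N S :: "nat set" and c :: real and w :: "real \<Rightarrow> real"
    and p :: "nat \<Rightarrow> real \<Rightarrow> real"
    and qT :: "nat set \<Rightarrow> nat \<Rightarrow> real" and qc :: "nat \<Rightarrow> real"
  assumes "rs_situation N c w p"
    and "S \<subseteq> N" and "S \<noteq> {}"
    and "\<And>T. T \<subseteq> S \<Longrightarrow> T \<noteq> {} \<Longrightarrow> coal_optimal w p T (qT T)"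
    and "\<And>i. i \<in> S \<Longrightarrow> single_optimal c (p i) (qc i)"
  shows "balanced (insert 0 S) (rs_game c w p qT qc)"
proof -
  have "0 \<notin> S" and "\<And>x. 0 \<le> x \<Longrightarrow> c < w x"
    using assms(1,2) unfolding rs_situation_def rs_problem_def by auto
  moreover have "coal_feasible w p T (qT T)" if "T \<subseteq> S" for T
    using assms(4)[OF that] by (cases "T = {}") (auto simp: coal_feasible_def coal_optimal_def)
  ultimately have "standalone_allocation c p qc \<in> core (insert 0 S) (rs_game c w p qT qc)"
    using assms(5) by (rule standalone_allocation_in_core)
  then show ?thesis
    unfolding balanced_def by blast
qed

end
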